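(* Let $\mathbb T$ be a finitary monad on $\mathbf{Set}$, let $B$ be a finite $\mathbb T$-algebra, and let $m$ be a $\mathbb T$-automaton with finite state set $X$ and output algebra $B$. Then for every $x\in X$ the formal power series $\llbracket x\rrbracket_m:A^*\to B$ is rational, i.e. the set $\{\partial_w(\llbracket x\rrbracket_m)\mid w\in A^*\}$ is finite.
   Context: Fix a finite set $A$ of actions. $LX=B\times X^A$; an $L$-coalgebra is a set $X$ with $o:X\to B$ and $\partial_a:X\to X$; $\partial_\epsilon(x)=x$, $\partial_{aw}(x)=\partial_w(\partial_a(x))$. The set $B^{A^*}$ is the final $L$-coalgebra with $o(\sigma)=\sigma(\epsilon)$, $\partial_a(\sigma)=\lambda w.\,\sigma(aw)$; for an $L$-coalgebra $Y$, $\llbracket-\rrbracket_Y:Y\to B^{A^*}$ is the unique coalgebra morphism, $\llbracket y\rrbracket_Y(w)=o(\partial_w(y))$. A $\mathbb T$-automaton consists of a finite set $X$, a $\mathbb T$-algebra $a^m:TB\to B$ (finitely generated), and maps $o^m:X\to B$, $t^m:A\times X\to TX$. Equip $B\times(TX)^A$ with the componentwise $\mathbb T$-algebra structure ($a^m$ on $B$, the free structure $\mu_X$ on $TX$, pointwise on the power); let $m^\sharp:TX\to B\times(TX)^A$ be the unique $\mathbb T$-algebra morphism with $m^\sharp(\eta_X(x))=(o^m(x),\lambda a.\,t^m(a,x))$. This makes $TX$ an $L$-coalgebra, and the trace semantics is $\llbracket x\rrbracket_m=\llbracket\eta_X(x)\rrbracket_{TX}$. *)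

theory Defs
  imports Main
begin

text \<open>Finitary monads on Set are presented by equational theories: a signature of
operation symbols (type 'f) with finite arities, and a set of equations between terms
over countably many variables. T X is the set of well-formed terms over X modulo the
congruence generated by the equations; T-algebras are the models of the theory.\<close>

datatype ('f, 'v) trm = Var 'v | Op 'f "('f, 'v) trm list"

fun wf_trm :: "('f \<Rightarrow> nat) \<Rightarrow> ('f, 'v) trm \<Rightarrow> bool" where
  "wf_trm ar (Var v) = True"
| "wf_trm ar (Op f ts) = (length ts = ar f \<and> (\<forall>t\<in>set ts. wf_trm ar t))"

fun eval_trm :: "('f \<Rightarrow> 'b list \<Rightarrow> 'b) \<Rightarrow> ('v \<Rightarrow> 'b) \<Rightarrow> ('f, 'v) trm \<Rightarrow> 'b" where
  "eval_trm I \<rho> (Var v) = \<rho> v"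
| "eval_trm I \<rho> (Op f ts) = I f (map (eval_trm I \<rho>) ts)"

fun subst_trm :: "('v \<Rightarrow> ('f, 'w) trm) \<Rightarrow> ('f, 'v) trm \<Rightarrow> ('f, 'w) trm" where
  "subst_trm \<sigma> (Var v) = \<sigma> v"
| "subst_trm \<sigma> (Op f ts) = Op f (map (subst_trm \<sigma>) ts)"

definition eq_theory :: "('f \<Rightarrow> nat) \<Rightarrow> (('f, nat) trm \<times> ('f, nat) trm) set \<Rightarrow> bool" where
  "eq_theory ar E \<longleftrightarrow> (\<forall>(l, r)\<in>E. wf_trm ar l \<and> wf_trm ar r)"

definition is_model :: "('f \<Rightarrow> nat) \<Rightarrow> (('f, nat) trm \<times> ('f, nat) trm) set
    \<Rightarrow> ('f \<Rightarrow> 'b list \<Rightarrow> 'b) \<Rightarrow> bool" where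
  "is_model ar E I \<longleftrightarrow> (\<forall>(l, r)\<in>E. \<forall>\<rho>. eval_trm I \<rho> l = eval_trm I \<rho> r)"

text \<open>The L-coalgebra structure on TX induced by the automaton, computed on representatives:
 m#(t) = (output, derivatives), where the output is evaluation in B under o^m
 (the algebra map TX -> B extending o^m) and the a-derivative is the Kleisli extension
 (substitution) of t^m(a,-). Both respect the E-congruence since B is a model.\<close>
definition aut_out :: "('f \<Rightarrow> 'b list \<Rightarrow> 'b) \<Rightarrow> ('x \<Rightarrow> 'b) \<Rightarrow> ('f, 'x) trm \<Rightarrow> 'b" where
  "aut_out I om t = eval_trm I om t"

definition aut_der :: "('a \<Rightarrow> 'x \<Rightarrow> ('f, 'x) trm) \<Rightarrow> 'a \<Rightarrow> ('f, 'x) trm \<Rightarrow> ('f, 'x) trm" where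
  "aut_der tm a t = subst_trm (tm a) t"

fun aut_der_word :: "('a \<Rightarrow> 'x \<Rightarrow> ('f, 'x) trm) \<Rightarrow> 'a list \<Rightarrow> ('f, 'x) trm \<Rightarrow> ('f, 'x) trm" where
  "aut_der_word tm [] t = t"
| "aut_der_word tm (a # w) t = aut_der_word tm w (aut_der tm a t)"

definition trace_sem :: "('f \<Rightarrow> 'b list \<Rightarrow> 'b) \<Rightarrow> ('x \<Rightarrow> 'b) \<Rightarrow> ('a \<Rightarrow> 'x \<Rightarrow> ('f, 'x) trm)
    \<Rightarrow> 'x \<Rightarrow> 'a list \<Rightarrow> 'b" where
  "trace_sem I om tm x w = aut_out I om (aut_der_word tm w (Var x))"

definition ps_der_word :: "'a list \<Rightarrow> ('a list \<Rightarrow> 'b) \<Rightarrow> ('a list \<Rightarrow> 'b)" where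
  "ps_der_word w \<sigma> = (\<lambda>v. \<sigma> (w @ v))"

definition rational :: "('a list \<Rightarrow> 'b) \<Rightarrow> bool" where
  "rational \<sigma> \<longleftrightarrow> finite {ps_der_word w \<sigma> | w. True}"

end

theory Submission
  imports Defs
begin

text \<open>Substitution commutes with derivation, so the \<open>w\<close>-derivative of the term \<open>Var x\<close> is a term
over the states whose leaves may be derived further independently. Evaluating, the
\<open>w\<close>-derivative of \<open>\<lbrakk>x\<rbrakk>\<close> is \<open>v \<mapsto> h (\<lambda>y. \<lbrakk>y\<rbrakk> v)\<close> for some \<open>h :: (X \<Rightarrow> B) \<Rightarrow> B\<close>; as \<open>X\<close> and \<open>B\<close>
are finite there are only finitely many such \<open>h\<close>, hence finitely many derivatives.\<close>

lemma eval_trm_subst_trm: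
  "eval_trm I \<rho> (subst_trm \<sigma> t) = eval_trm I (\<lambda>y. eval_trm I \<rho> (\<sigma> y)) t"
  by (induction t) (auto cong: map_cong)

lemma subst_trm_subst_trm:
  "subst_trm \<tau> (subst_trm \<sigma> t) = subst_trm (\<lambda>y. subst_trm \<tau> (\<sigma> y)) t"
  by (induction t) auto

lemma subst_trm_Var: "subst_trm Var t = t"
  by (induction t) (auto intro: map_idI)

lemma aut_der_word_append:
  "aut_der_word tm (w @ v) t = aut_der_word tm v (aut_der_word tm w t)"
  by (induction w arbitrary: t) auto

lemma aut_der_word_eq_subst_trm:
  "aut_der_word tm w t = subst_trm (\<lambda>y. aut_der_word tm w (Var y)) t"
proof (induction w arbitrary: t)
  case Nil
  show ?case by (simp add: subst_trm_Var)
next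
  case (Cons a w)
  let ?\<delta> = "\<lambda>y. aut_der_word tm w (Var y)"
  have "aut_der_word tm (a # w) t = subst_trm ?\<delta> (subst_trm (tm a) t)"
    by (simp add: aut_der_def Cons.IH[of "subst_trm (tm a) t"])
  also have "\<dots> = subst_trm (\<lambda>y. subst_trm ?\<delta> (tm a y)) t"
    by (rule subst_trm_subst_trm)
  also have "(\<lambda>y. subst_trm ?\<delta> (tm a y)) = (\<lambda>y. aut_der_word tm (a # w) (Var y))"
    by (simp add: aut_der_def Cons.IH[of "tm a _"])
  finally show ?case .
qed

lemma ps_der_word_trace_sem:
  "ps_der_word w (trace_sem I om tm x)
     = (\<lambda>v. eval_trm I (\<lambda>y. trace_sem I om tm y v) (aut_der_word tm w (Var x)))"
proof
  fix v
  have "aut_der_word tm (w @ v) (Var x)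
      = subst_trm (\<lambda>y. aut_der_word tm v (Var y)) (aut_der_word tm w (Var x))"
    unfolding aut_der_word_append by (rule aut_der_word_eq_subst_trm)
  then show "ps_der_word w (trace_sem I om tm x) v
      = eval_trm I (\<lambda>y. trace_sem I om tm y v) (aut_der_word tm w (Var x))"
    by (simp add: ps_der_word_def trace_sem_def aut_out_def eval_trm_subst_trm)
qed

lemma rational_if_derivatives_factor:
  fixes \<sigma> :: "'x::finite \<Rightarrow> 'a list \<Rightarrow> 'b::finite"
  assumes "\<And>w. ps_der_word w (\<sigma> x) = (\<lambda>v. h w (\<lambda>y. \<sigma> y v))"
  shows "rational (\<sigma> x)"
proof -
  have "{ps_der_word w (\<sigma> x) | w. True} \<subseteq> range (\<lambda>g v. g (\<lambda>y. \<sigma> y v))"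
    by (auto simp: assms)
  then show ?thesis
    unfolding rational_def by (rule finite_subset) simp
qed

theorem mainTheorem3:
  fixes ar :: "'f \<Rightarrow> nat"
    and E :: "(('f, nat) trm \<times> ('f, nat) trm) set"
    and I :: "'f \<Rightarrow> 'b::finite list \<Rightarrow> 'b"
    and om :: "'x::finite \<Rightarrow> 'b"
    and tm :: "'a::finite \<Rightarrow> 'x \<Rightarrow> ('f, 'x) trm"
  assumes "eq_theory ar E"
    and "is_model ar E I"
    and "\<forall>a x. wf_trm ar (tm a x)"
  shows "\<forall>x. rational (trace_sem I om tm x)"
proof
  fix x
  show "rational (trace_sem I om tm x)"
    by (rule rational_if_derivatives_factor[OF ps_der_word_trace_sem])
qed

end
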